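(* Let $(X_1,X_2,Y)$ be jointly distributed finite-valued random variables, and let $I_\cap,UI_1,UI_2,SI$ be nonnegative real numbers satisfying $I(X_1X_2;Y)=I_\cap+SI+UI_1+UI_2$, $I(X_1;Y)=I_\cap+UI_1$, $I(X_2;Y)=I_\cap+UI_2$. Then: (a) if $X_1-X_2-Y$, then $I_\cap=I(X_1;Y)$; (b) if $X_2-X_1-Y$, then $I_\cap=I(X_2;Y)$; (c) if both $X_1-X_2-Y$ and $X_2-X_1-Y$, then $I_\cap=I(X_1;Y)=I(X_2;Y)=I(X_1X_2;Y)$; (d) if $X_1-Y-X_2$, then $I_\cap\geq I(X_1;X_2)$.
   Context: For finite-valued random variables, $A-B-C$ means that $A$ and $C$ are conditionally independent given $B$. $X_1X_2$ denotes the joint variable $(X_1,X_2)$. The numbers $I_\cap$, $UI_1$, $UI_2$, $SI$ represent, respectively, the redundant, unique (of $X_1$), unique (of $X_2$) and synergistic information in a partial information decomposition of $I(X_1X_2;Y)$. *)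

theory Defs
  imports "HOL-Probability.Probability"
begin

definition mutual_info :: "('x \<times> 'y) pmf \<Rightarrow> real" where
  "mutual_info P =
     (\<Sum>z\<in>set_pmf P. pmf P z *
        log 2 (pmf P z / (pmf (map_pmf fst P) (fst z) * pmf (map_pmf snd P) (snd z))))"

text \<open>Markov chain A - B - C: A and C conditionally independent given B,
  for a joint pmf of (A,B,C):  p(a,b,c) p(b) = p(a,b) p(b,c).\<close>

definition markov_chain :: "('a \<times> 'b \<times> 'c) pmf \<Rightarrow> bool" where
  "markov_chain Q \<longleftrightarrow>
     (\<forall>a b c. pmf Q (a, b, c) * pmf (map_pmf (\<lambda>(a, b, c). b) Q) b =
              pmf (map_pmf (\<lambda>(a, b, c). (a, b)) Q) (a, b) *
              pmf (map_pmf (\<lambda>(a, b, c). (b, c)) Q) (b, c))"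

end

theory Submission
  imports Defs
begin

text \<open>If \<open>X\<^sub>1 - X\<^sub>2 - Y\<close>, then \<open>I(X\<^sub>1X\<^sub>2;Y) = I(X\<^sub>2;Y)\<close>, which forces \<open>SI = UI\<^sub>1 = 0\<close> and hence
  \<open>I\<^sub>\<inter> = I(X\<^sub>1;Y)\<close>; symmetrically for \<open>X\<^sub>2 - X\<^sub>1 - Y\<close>. If \<open>X\<^sub>1 - Y - X\<^sub>2\<close>, then
  \<open>I(X\<^sub>1;Y) + I(X\<^sub>2;Y) = I(X\<^sub>1X\<^sub>2;Y) + I(X\<^sub>1;X\<^sub>2)\<close>, which gives \<open>I\<^sub>\<inter> = SI + I(X\<^sub>1;X\<^sub>2)\<close>.
  Both identities hold pointwise for the information densities, since a Markov chain
  \<open>A - B - C\<close> means \<open>p(a,b,c) p(b) = p(a,b) p(b,c)\<close>.\<close>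

definition info_density :: "'w pmf \<Rightarrow> ('w \<Rightarrow> 'x) \<Rightarrow> ('w \<Rightarrow> 'y) \<Rightarrow> 'w \<Rightarrow> real" where
  "info_density P X Y w =
     log 2 (pmf (map_pmf (\<lambda>w. (X w, Y w)) P) (X w, Y w))
     - log 2 (pmf (map_pmf X P) (X w)) - log 2 (pmf (map_pmf Y P) (Y w))"

lemma pmf_map_pmf_pos:
  assumes "w \<in> set_pmf P"
  shows "pmf (map_pmf V P) (V w) > 0"
  using assms by (intro pmf_positive) auto

lemma pmf_map_pmf_inj:
  assumes "inj f"
  shows "pmf (map_pmf (\<lambda>w. f (V w)) P) (f (V w)) = pmf (map_pmf V P) (V w)"
proof -
  have "map_pmf (\<lambda>w. f (V w)) P = map_pmf f (map_pmf V P)"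
    by (simp add: map_pmf_comp)
  then show ?thesis
    using pmf_map_inj' [OF assms] by simp
qed

lemma sum_set_map_pmf:
  assumes "finite (set_pmf P)"
  shows "(\<Sum>v\<in>set_pmf (map_pmf f P). pmf (map_pmf f P) v * g v) =
         (\<Sum>w\<in>set_pmf P. pmf P w * (g (f w) :: real))"
proof -
  have "(\<integral>v. g v \<partial>measure_pmf (map_pmf f P)) =
        (\<Sum>v\<in>set_pmf (map_pmf f P). g v * pmf (map_pmf f P) v)"
    using assms by (intro integral_measure_pmf_real) auto
  moreover have "(\<integral>w. g (f w) \<partial>measure_pmf P) = (\<Sum>w\<in>set_pmf P. g (f w) * pmf P w)"
    using assms by (intro integral_measure_pmf_real) auto
  ultimately show ?thesis
    by (simp add: mult.commute)
qed

lemma mutual_info_eq_sum_info_density: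
  assumes "finite (set_pmf P)"
  shows "mutual_info (map_pmf (\<lambda>w. (X w, Y w)) P) =
         (\<Sum>w\<in>set_pmf P. pmf P w * info_density P X Y w)"
proof -
  have "mutual_info (map_pmf (\<lambda>w. (X w, Y w)) P) =
    (\<Sum>w\<in>set_pmf P. pmf P w * log 2 (pmf (map_pmf (\<lambda>w. (X w, Y w)) P) (X w, Y w) /
        (pmf (map_pmf X P) (X w) * pmf (map_pmf Y P) (Y w))))"
    unfolding mutual_info_def by (subst sum_set_map_pmf [OF assms]) (simp add: map_pmf_comp)
  also have "\<dots> = (\<Sum>w\<in>set_pmf P. pmf P w * info_density P X Y w)"
  proof (intro sum.cong refl)
    fix w assume "w \<in> set_pmf P"
    note pos = pmf_map_pmf_pos [OF this]
    from pos [of "\<lambda>w. (X w, Y w)"] pos [of X] pos [of Y] show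
      "pmf P w * log 2 (pmf (map_pmf (\<lambda>w. (X w, Y w)) P) (X w, Y w) /
         (pmf (map_pmf X P) (X w) * pmf (map_pmf Y P) (Y w))) = pmf P w * info_density P X Y w"
      unfolding info_density_def by (simp add: log_divide log_mult)
  qed
  finally show ?thesis .
qed

lemma info_density_inj_left:
  assumes "inj f"
  shows "info_density P (\<lambda>w. f (X w)) Y w = info_density P X Y w"
proof -
  have "inj (map_prod f id)"
    using assms by (simp add: prod.inj_map)
  from pmf_map_pmf_inj [OF this, of "\<lambda>w. (X w, Y w)" P w] pmf_map_pmf_inj [OF assms, of X P w]
  show ?thesis
    unfolding info_density_def by simp
qed

lemma mutual_info_inj_left:
  assumes "finite (set_pmf P)" "inj f"
  shows "mutual_info (map_pmf (\<lambda>w. (f (X w), Y w)) P) = mutual_info (map_pmf (\<lambda>w. (X w, Y w)) P)"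
  unfolding mutual_info_eq_sum_info_density [OF assms(1), of "\<lambda>w. f (X w)" Y]
    mutual_info_eq_sum_info_density [OF assms(1), of X Y]
  by (simp add: info_density_inj_left [OF assms(2)])

lemma markov_chain_log_pmf:
  assumes "markov_chain (map_pmf (\<lambda>w. (X w, Y w, Z w)) P)" "w \<in> set_pmf P"
  shows "log 2 (pmf (map_pmf (\<lambda>w. (X w, Y w, Z w)) P) (X w, Y w, Z w)) + log 2 (pmf (map_pmf Y P) (Y w)) =
         log 2 (pmf (map_pmf (\<lambda>w. (X w, Y w)) P) (X w, Y w)) + log 2 (pmf (map_pmf (\<lambda>w. (Y w, Z w)) P) (Y w, Z w))"
proof -
  have "pmf (map_pmf (\<lambda>w. (X w, Y w, Z w)) P) (X w, Y w, Z w) * pmf (map_pmf Y P) (Y w) =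
        pmf (map_pmf (\<lambda>w. (X w, Y w)) P) (X w, Y w) * pmf (map_pmf (\<lambda>w. (Y w, Z w)) P) (Y w, Z w)"
    using assms(1) unfolding markov_chain_def by (simp add: map_pmf_comp)
  then have "log 2 (pmf (map_pmf (\<lambda>w. (X w, Y w, Z w)) P) (X w, Y w, Z w) * pmf (map_pmf Y P) (Y w)) =
        log 2 (pmf (map_pmf (\<lambda>w. (X w, Y w)) P) (X w, Y w) * pmf (map_pmf (\<lambda>w. (Y w, Z w)) P) (Y w, Z w))"
    by simp
  moreover note pos = pmf_map_pmf_pos [OF assms(2)]
  ultimately show ?thesis
    using pos [of "\<lambda>w. (X w, Y w, Z w)"] pos [of Y] pos [of "\<lambda>w. (X w, Y w)"] pos [of "\<lambda>w. (Y w, Z w)"]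
    by (simp add: log_mult)
qed

lemma mutual_info_markov_chain:
  assumes "finite (set_pmf P)" "markov_chain (map_pmf (\<lambda>w. (X w, Y w, Z w)) P)"
  shows "mutual_info (map_pmf (\<lambda>w. ((X w, Y w), Z w)) P) = mutual_info (map_pmf (\<lambda>w. (Y w, Z w)) P)"
  unfolding mutual_info_eq_sum_info_density [OF assms(1), of "\<lambda>w. (X w, Y w)" Z]
    mutual_info_eq_sum_info_density [OF assms(1), of Y Z]
proof (intro sum.cong refl)
  fix w assume "w \<in> set_pmf P"
  have "inj (\<lambda>((a, b), c). (a, b, c))"
    by (auto simp: inj_def)
  from pmf_map_pmf_inj [OF this, of "\<lambda>w. ((X w, Y w), Z w)" P w]
    markov_chain_log_pmf [OF assms(2) \<open>w \<in> set_pmf P\<close>]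
  show "pmf P w * info_density P (\<lambda>w. (X w, Y w)) Z w = pmf P w * info_density P Y Z w"
    unfolding info_density_def by simp
qed

lemma mutual_info_markov_chain_sum:
  assumes "finite (set_pmf P)" "markov_chain (map_pmf (\<lambda>w. (A w, B w, C w)) P)"
  shows "mutual_info (map_pmf (\<lambda>w. (A w, B w)) P) + mutual_info (map_pmf (\<lambda>w. (C w, B w)) P) =
         mutual_info (map_pmf (\<lambda>w. ((A w, C w), B w)) P) + mutual_info (map_pmf (\<lambda>w. (A w, C w)) P)"
  unfolding mutual_info_eq_sum_info_density [OF assms(1)] sum.distrib [symmetric]
proof (intro sum.cong refl)
  fix w assume "w \<in> set_pmf P"
  have "inj (\<lambda>((a, c), b). (a, b, c))"
    by (auto simp: inj_def)
  from pmf_map_pmf_inj [OF this, of "\<lambda>w. ((A w, C w), B w)" P w]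
    pmf_map_pmf_inj [OF swap_inj_on, of "\<lambda>w. (C w, B w)" P w]
    markov_chain_log_pmf [OF assms(2) \<open>w \<in> set_pmf P\<close>]
  have "info_density P A B w + info_density P C B w =
        info_density P (\<lambda>w. (A w, C w)) B w + info_density P A C w"
    unfolding info_density_def by simp
  then show "pmf P w * info_density P A B w + pmf P w * info_density P C B w =
        pmf P w * info_density P (\<lambda>w. (A w, C w)) B w + pmf P w * info_density P A C w"
    by (simp flip: distrib_left)
qed

theorem lemma4:
  fixes P :: "('a \<times> 'b \<times> 'c) pmf"
    and I_cap UI1 UI2 SI :: real
  assumes fin: "finite (set_pmf P)"
    and nonneg: "I_cap \<ge> 0" "UI1 \<ge> 0" "UI2 \<ge> 0" "SI \<ge> 0"
    and joint: "mutual_info (map_pmf (\<lambda>(x1, x2, y). ((x1, x2), y)) P) = I_cap + SI + UI1 + UI2"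
    and m1: "mutual_info (map_pmf (\<lambda>(x1, x2, y). (x1, y)) P) = I_cap + UI1"
    and m2: "mutual_info (map_pmf (\<lambda>(x1, x2, y). (x2, y)) P) = I_cap + UI2"
  shows
    "(markov_chain (map_pmf (\<lambda>(x1, x2, y). (x1, x2, y)) P) \<longrightarrow>
        I_cap = mutual_info (map_pmf (\<lambda>(x1, x2, y). (x1, y)) P))
   \<and> (markov_chain (map_pmf (\<lambda>(x1, x2, y). (x2, x1, y)) P) \<longrightarrow>
        I_cap = mutual_info (map_pmf (\<lambda>(x1, x2, y). (x2, y)) P))
   \<and> (markov_chain (map_pmf (\<lambda>(x1, x2, y). (x1, x2, y)) P) \<and>
      markov_chain (map_pmf (\<lambda>(x1, x2, y). (x2, x1, y)) P) \<longrightarrow>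
        I_cap = mutual_info (map_pmf (\<lambda>(x1, x2, y). (x1, y)) P) \<and>
        mutual_info (map_pmf (\<lambda>(x1, x2, y). (x1, y)) P) =
          mutual_info (map_pmf (\<lambda>(x1, x2, y). (x2, y)) P) \<and>
        mutual_info (map_pmf (\<lambda>(x1, x2, y). (x2, y)) P) =
          mutual_info (map_pmf (\<lambda>(x1, x2, y). ((x1, x2), y)) P))
   \<and> (markov_chain (map_pmf (\<lambda>(x1, x2, y). (x1, y, x2)) P) \<longrightarrow>
        I_cap \<ge> mutual_info (map_pmf (\<lambda>(x1, x2, y). (x1, x2)) P))"
proof -
  let ?X1 = "fst :: 'a \<times> 'b \<times> 'c \<Rightarrow> 'a" and ?X2 = "\<lambda>w. fst (snd w)" and ?Y = "\<lambda>w. snd (snd w)"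
  have a: "mutual_info (map_pmf (\<lambda>(x1, x2, y). ((x1, x2), y)) P) = mutual_info (map_pmf (\<lambda>(x1, x2, y). (x2, y)) P)"
    if "markov_chain (map_pmf (\<lambda>(x1, x2, y). (x1, x2, y)) P)"
    using that mutual_info_markov_chain [OF fin, of ?X1 ?X2 ?Y] by (simp add: case_prod_unfold)
  have b: "mutual_info (map_pmf (\<lambda>(x1, x2, y). ((x1, x2), y)) P) = mutual_info (map_pmf (\<lambda>(x1, x2, y). (x1, y)) P)"
    if "markov_chain (map_pmf (\<lambda>(x1, x2, y). (x2, x1, y)) P)"
    using that mutual_info_markov_chain [OF fin, of ?X2 ?X1 ?Y]
      mutual_info_inj_left [OF fin swap_inj_on, of "\<lambda>w. (?X1 w, ?X2 w)" ?Y]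
    by (simp add: case_prod_unfold)
  have d: "mutual_info (map_pmf (\<lambda>(x1, x2, y). (x1, y)) P) + mutual_info (map_pmf (\<lambda>(x1, x2, y). (x2, y)) P) =
      mutual_info (map_pmf (\<lambda>(x1, x2, y). ((x1, x2), y)) P) + mutual_info (map_pmf (\<lambda>(x1, x2, y). (x1, x2)) P)"
    if "markov_chain (map_pmf (\<lambda>(x1, x2, y). (x1, y, x2)) P)"
    using that mutual_info_markov_chain_sum [OF fin, of ?X1 ?Y ?X2] by (simp add: case_prod_unfold)
  show ?thesis
    using a b d joint m1 m2 nonneg by auto
qed

end
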